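(* Let $\Theta\subset\mathbb{R}^p$ be a parameter set containing the true parameter $\theta^\star$. Let $\Phi_1,\dots,\Phi_{N_j}\in\mathbb{R}^{c\times p}$ be the regressor matrices evaluated at sampling times $t_1,\dots,t_{N_j}$ along a planned trajectory, and let $A\in\mathbb{R}^{M\times p}$, $M=N_jc$, be their vertical stack. Assume the executed trajectory equals the planned one, so that the stacked regressor of the executed samples is $A_{\mathrm{act}}=A$, and that the measurements satisfy $z_j=\Phi_j\theta^\star+w_j$ with $\|w_j\|_\infty\le\overline w$ for all $j$; write $z=A\theta^\star+w$ for the stacked data. Define $$\Theta_{\mathrm{act}}=\{\theta\in\Theta:\ \|z-A_{\mathrm{act}}\theta\|_\infty\le\overline w\},\quad \mathcal{E}_\theta=\{e\in\mathbb{R}^p:\|Ae\|_\infty\le 2\overline w\},\quad \Theta_{N_j}(\theta^\star)=\Theta\cap(\theta^\star+\mathcal{E}_\theta).$$ Then for every unit direction $d\in\mathbb{R}^p$, $$w_d(\Theta_{\mathrm{act}})\le w_d\big(\Theta_{N_j}(\theta^\star)\big)\le \min\big(w_d(\Theta),\,2h_{\mathcal{E}_\theta}(d)\big),$$ where $h_{\mathcal{E}_\theta}(d)=\sup_{e\in\mathcal{E}_\theta}d^\top e$ admits the exact dual form $$h_{\mathcal{E}_\theta}(d)=2\overline w\,\min_{\lambda\in\mathbb{R}^M:\ A^\top\lambda=d}\|\lambda\|_1 .$$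
   Context: For a set $\mathcal{C}\subset\mathbb{R}^p$ and a direction $d$, the width of $\mathcal{C}$ along $d$ is $w_d(\mathcal{C})=\sup_{x\in\mathcal{C}}d^\top x-\inf_{x\in\mathcal{C}}d^\top x$. The regressors come from a linear-in-parameter identification model $z(t)=\Phi(x,u)\theta+w(t)$ with $\|w(t)\|_\infty\le\overline w$. In the paper, $d$ ranges over a finite set $\mathcal{D}$ of unit directions. *)

theory Defs
  imports "HOL-Analysis.Analysis" "HOL-Library.Extended_Real"
begin

definition width :: "real^'p \<Rightarrow> (real^'p) set \<Rightarrow> ereal" where
  "width d C = (SUP x\<in>C. ereal (d \<bullet> x)) - (INF x\<in>C. ereal (d \<bullet> x))"

definition support_fun :: "(real^'p) set \<Rightarrow> real^'p \<Rightarrow> ereal" where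
  "support_fun E d = (SUP e\<in>E. ereal (d \<bullet> e))"

definition l1norm :: "real^'m \<Rightarrow> real" where
  "l1norm v = (\<Sum>i\<in>UNIV. \<bar>v $ i\<bar>)"

text \<open>Vertical stack of the c x p regressor matrices Phi_j (j ranging over the
  finite sample index type 'n): row (j,i) of the stack is row i of Phi_j.
  M = CARD('n) * CARD('c).\<close>
definition stack_mat :: "('n::finite \<Rightarrow> real^'p^'c::finite) \<Rightarrow> real^'p^('n \<times> 'c)" where
  "stack_mat Phi = (\<chi> ji. Phi (fst ji) $ (snd ji))"

definition stack_vec :: "('n::finite \<Rightarrow> real^'c::finite) \<Rightarrow> real^('n \<times> 'c)" where
  "stack_vec z = (\<chi> ji. z (fst ji) $ (snd ji))"

end

theory Submission
  imports Defs
begin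

text \<open>Since the true parameter is consistent with the data, every consistent parameter differs
  from it by an error \<open>e\<close> with \<open>\<parallel>A e\<parallel>\<^sub>\<infinity> \<le> 2 wbar\<close> (triangle inequality); this gives the inclusions,
  and because the error set is symmetric its translates have width at most \<open>2 h(d)\<close>.
  The dual form of \<open>h\<close> is linear programming duality for \<open>max {d\<bullet>e. \<parallel>A e\<parallel>\<^sub>\<infinity> \<le> r}\<close>: Hoelder's
  inequality gives weak duality, and strong duality comes from separating \<open>d\<close> from the compact
  convex set \<open>A\<^sup>T(l1-ball)\<close>; testing the separating functional against the vertices \<open>\<plusminus>t e\<^sub>i\<close> of
  the l1-ball shows that it is, after scaling, a feasible direction.\<close>

lemma infnorm_le_cart:
  fixes x :: "real^'n"
  assumes "\<And>i. \<bar>x $ i\<bar> \<le> B"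
  shows "infnorm x \<le> B"
  unfolding infnorm_cart by (rule cSup_least) (use assms in auto)

lemma infnorm_diff_le: "infnorm (x - y) \<le> infnorm x + infnorm y"
  using infnorm_triangle[of x "- y"] by (simp add: infnorm_neg)

lemma stack_mat_mult_vec: "stack_mat Phi *v x = stack_vec (\<lambda>j. Phi j *v x)"
  by (simp add: vec_eq_iff stack_mat_def stack_vec_def matrix_vector_mult_def)

lemma stack_vec_diff: "stack_vec u - stack_vec v = stack_vec (\<lambda>j. u j - v j)"
  by (simp add: vec_eq_iff stack_vec_def)

lemma infnorm_stack_vec_le:
  assumes "\<And>j. infnorm (v j) \<le> B"
  shows "infnorm (stack_vec v) \<le> B"
proof (rule infnorm_le_cart)
  fix ji
  show "\<bar>stack_vec v $ ji\<bar> \<le> B"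
    using component_le_infnorm_cart[of "v (fst ji)" "snd ji"] assms[of "fst ji"]
    by (simp add: stack_vec_def)
qed

lemma width_mono: "C \<subseteq> D \<Longrightarrow> width d C \<le> width d D"
  unfolding width_def by (intro ereal_minus_mono SUP_subset_mono INF_superset_mono) auto

lemma width_translate_le_twice_support_fun:
  assumes sym: "\<And>e. e \<in> E \<Longrightarrow> - e \<in> E"
  shows "width d ((\<lambda>e. x + e) ` E) \<le> 2 * support_fun E d"
proof (cases "E = {}")
  case True
  then show ?thesis by (simp add: width_def bot_ereal_def top_ereal_def)
next
  case False
  define h where "h = support_fun E d"
  have upper: "ereal (d \<bullet> e) \<le> h" if "e \<in> E" for e
    unfolding h_def support_fun_def using that by (rule SUP_upper)
  from False obtain e0 where "e0 \<in> E" by blast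
  with upper have "h \<noteq> - \<infinity>" by force
  then consider "h = \<infinity>" | hr where "h = ereal hr" by (cases h) auto
  then show ?thesis
  proof cases
    case 1
    then show ?thesis by (simp add: h_def)
  next
    case hr: 2
    have "(SUP y\<in>(\<lambda>e. x + e) ` E. ereal (d \<bullet> y)) \<le> ereal (d \<bullet> x + hr)"
    proof (rule SUP_least)
      fix y assume "y \<in> (\<lambda>e. x + e) ` E"
      then obtain e where "e \<in> E" "y = x + e" by blast
      with upper[of e] hr show "ereal (d \<bullet> y) \<le> ereal (d \<bullet> x + hr)"
        by (simp add: inner_add_right)
    qed
    moreover have "ereal (d \<bullet> x - hr) \<le> (INF y\<in>(\<lambda>e. x + e) ` E. ereal (d \<bullet> y))"
    proof (rule INF_greatest)
      fix y assume "y \<in> (\<lambda>e. x + e) ` E"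
      then obtain e where "e \<in> E" "y = x + e" by blast
      with upper[of "- e"] sym hr show "ereal (d \<bullet> x - hr) \<le> ereal (d \<bullet> y)"
        by (simp add: inner_add_right)
    qed
    ultimately have "width d ((\<lambda>e. x + e) ` E) \<le> ereal (d \<bullet> x + hr) - ereal (d \<bullet> x - hr)"
      unfolding width_def by (rule ereal_minus_mono)
    then show ?thesis using hr by (simp add: h_def)
  qed
qed

lemma l1norm_nonneg: "0 \<le> l1norm x"
  by (simp add: l1norm_def sum_nonneg)

lemma continuous_on_l1norm: "continuous_on S l1norm"
  unfolding l1norm_def by (intro continuous_intros)

lemma compact_l1norm_le: "compact {x :: real^'m. l1norm x \<le> t}"
  unfolding compact_eq_bounded_closed
proof
  show "bounded {x :: real^'m. l1norm x \<le> t}"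
    unfolding bounded_iff l1norm_def using norm_le_l1_cart order_trans by blast
  show "closed {x :: real^'m. l1norm x \<le> t}"
    by (intro closed_Collect_le continuous_on_l1norm continuous_on_const)
qed

lemma convex_l1norm_le: "convex {x :: real^'m. l1norm x \<le> t}"
  unfolding convex_def
proof safe
  fix x y :: "real^'m" and u v :: real
  assume h: "l1norm x \<le> t" "l1norm y \<le> t" "0 \<le> u" "0 \<le> v" "u + v = 1"
  have "\<bar>u * x $ i + v * y $ i\<bar> \<le> u * \<bar>x $ i\<bar> + v * \<bar>y $ i\<bar>" for i
    using abs_triangle_ineq[of "u * x $ i" "v * y $ i"] h by (simp add: abs_mult)
  then have "l1norm (u *\<^sub>R x + v *\<^sub>R y) \<le> (\<Sum>i\<in>UNIV. u * \<bar>x $ i\<bar> + v * \<bar>y $ i\<bar>)"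
    unfolding l1norm_def by (intro sum_mono) simp
  also have "\<dots> = u * l1norm x + v * l1norm y"
    by (simp add: l1norm_def sum.distrib sum_distrib_left)
  also have "\<dots> \<le> u * t + v * t"
    using h by (intro add_mono mult_left_mono) auto
  finally show "l1norm (u *\<^sub>R x + v *\<^sub>R y) \<le> t"
    using h by (simp add: distrib_right[symmetric])
qed

lemma l1norm_axis: "l1norm (axis i (c :: real)) = \<bar>c\<bar>"
proof -
  have "l1norm (axis i c) = (\<Sum>j\<in>UNIV. if j = i then \<bar>c\<bar> else 0)"
    unfolding l1norm_def axis_def by (rule sum.cong) auto
  then show ?thesis by simp
qed

lemma inner_le_l1norm_infnorm: "x \<bullet> y \<le> l1norm x * infnorm (y :: real^'m)"
proof -
  have "x \<bullet> y = (\<Sum>i\<in>UNIV. x $ i * y $ i)"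
    by (simp add: inner_vec_def)
  also have "\<dots> \<le> (\<Sum>i\<in>UNIV. \<bar>x $ i\<bar> * infnorm y)"
  proof (rule sum_mono)
    fix i
    have "x $ i * y $ i \<le> \<bar>x $ i\<bar> * \<bar>y $ i\<bar>"
      by (metis abs_ge_self abs_mult)
    also have "\<dots> \<le> \<bar>x $ i\<bar> * infnorm y"
      by (simp add: component_le_infnorm_cart mult_left_mono)
    finally show "x $ i * y $ i \<le> \<bar>x $ i\<bar> * infnorm y" .
  qed
  also have "\<dots> = l1norm x * infnorm y"
    by (simp add: l1norm_def sum_distrib_right)
  finally show ?thesis .
qed

lemma infnorm_le_if_l1_ball_inner_le:
  fixes y :: "real^'m"
  assumes t: "0 \<le> t" and bound: "\<And>x. l1norm x \<le> t \<Longrightarrow> x \<bullet> y \<le> c"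
  shows "t * infnorm y \<le> c"
proof -
  have "\<bar>(t *\<^sub>R y) $ i\<bar> \<le> c" for i
  proof -
    have "l1norm (axis i (t * sgn (y $ i))) \<le> t"
      using t by (simp add: l1norm_axis abs_mult abs_sgn_eq)
    then have "axis i (t * sgn (y $ i)) \<bullet> y \<le> c" by (rule bound)
    moreover have "sgn (y $ i) * y $ i = \<bar>y $ i\<bar>"
      by (metis abs_sgn mult.commute)
    ultimately show ?thesis
      using t by (simp add: inner_axis' abs_mult mult.assoc)
  qed
  then have "infnorm (t *\<^sub>R y) \<le> c" by (rule infnorm_le_cart)
  then show ?thesis using t by (simp add: infnorm_mul)
qed

lemma exists_min_l1norm_solution:
  fixes M :: "real^'m^'p"
  assumes "{x. M *v x = d} \<noteq> {}"
  shows "\<exists>x0\<in>{x. M *v x = d}. \<forall>x\<in>{x. M *v x = d}. l1norm x0 \<le> l1norm x"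
proof -
  let ?F = "{x. M *v x = d}"
  obtain x1 where x1: "x1 \<in> ?F" using assms by blast
  let ?K = "?F \<inter> {x. l1norm x \<le> l1norm x1}"
  have "closed ?F"
    by (rule closed_Collect_eq) (auto intro: continuous_intros linear_continuous_on
        matrix_vector_mul_bounded_linear)
  then have K_compact: "compact ?K" using compact_l1norm_le by (rule closed_Int_compact)
  have K_nonempty: "?K \<noteq> {}" using x1 by auto
  obtain x0 where x0: "x0 \<in> ?K" "\<forall>x\<in>?K. l1norm x0 \<le> l1norm x"
    using continuous_attains_inf[OF K_compact K_nonempty continuous_on_l1norm] by blast
  have "l1norm x0 \<le> l1norm x" if "x \<in> ?F" for x
    using x0 that by (cases "l1norm x \<le> l1norm x1") auto
  with x0 show ?thesis by blast
qed

lemma weak_duality: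
  fixes A :: "real^'p^'m"
  assumes "transpose A *v lam = d"
  shows "d \<bullet> e \<le> l1norm lam * infnorm (A *v e)"
proof -
  have "d \<bullet> e = lam \<bullet> (A *v e)"
    using assms dot_lmul_matrix by (auto simp: transpose_matrix_vector)
  also have "\<dots> \<le> l1norm lam * infnorm (A *v e)"
    by (rule inner_le_l1norm_infnorm)
  finally show ?thesis .
qed

lemma separating_direction:
  fixes A :: "real^'p^'m"
  assumes t: "0 < t" and r: "0 < r"
    and d: "d \<notin> (\<lambda>lam. transpose A *v lam) ` {lam. l1norm lam \<le> t}"
  obtains e where "infnorm (A *v e) \<le> r" "r * t < d \<bullet> e"
proof -
  let ?S = "(\<lambda>lam. transpose A *v lam) ` {lam. l1norm lam \<le> t}"
  have "compact ?S"
    by (intro compact_continuous_image linear_continuous_on matrix_vector_mul_bounded_linear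
        compact_l1norm_le)
  moreover have "convex ?S"
    by (intro convex_linear_image matrix_vector_mul_linear convex_l1norm_le)
  ultimately obtain a b where ab: "a \<bullet> d < b" "\<forall>x\<in>?S. b < a \<bullet> x"
    using separating_hyperplane_closed_point[of ?S d] d compact_imp_closed by blast
  have "0 \<in> ?S"
    using t by (auto simp: l1norm_def image_iff intro!: exI[of _ 0])
  with ab have b: "b < 0" by fastforce
  define c where "c = - b"
  define e0 where "e0 = - a"
  have c: "0 < c" and d_e0: "c < d \<bullet> e0"
    using ab b by (auto simp: c_def e0_def inner_commute)
  have "lam \<bullet> (A *v e0) \<le> c" if "l1norm lam \<le> t" for lam
  proof -
    have "b < a \<bullet> (transpose A *v lam)" using ab that by blast
    then show ?thesis
      by (simp add: c_def e0_def vec.neg transpose_matrix_vector dot_lmul_matrix[symmetric]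
          inner_commute)
  qed
  then have bound: "t * infnorm (A *v e0) \<le> c"
    using t by (intro infnorm_le_if_l1_ball_inner_le) auto
  define e where "e = (r * t / c) *\<^sub>R e0"
  have "infnorm (A *v e) = (r / c) * (t * infnorm (A *v e0))"
    using r t c by (simp add: e_def matrix_vector_mult_scaleR infnorm_mul)
  also have "\<dots> \<le> (r / c) * c"
    using bound r c by (intro mult_left_mono) auto
  also have "\<dots> = r"
    using c by simp
  finally have "infnorm (A *v e) \<le> r" .
  moreover have "r * t < d \<bullet> e"
  proof -
    have "(r * t / c) * c < (r * t / c) * (d \<bullet> e0)"
      using r t c d_e0 by (intro mult_strict_left_mono) auto
    then show ?thesis using c by (simp add: e_def)
  qed
  ultimately show ?thesis by (rule that)
qed

lemma support_fun_infnorm_le: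
  fixes A :: "real^'p^'m"
  assumes r: "0 < r"
  shows "support_fun {e. infnorm (A *v e) \<le> r} d
           = ereal r * (INF lam\<in>{lam. transpose A *v lam = d}. ereal (l1norm lam))"
proof -
  define E where "E = {e. infnorm (A *v e) \<le> r}"
  define F where "F = {lam. transpose A *v lam = d}"
  define h where "h = support_fun E d"
  have upper: "ereal (d \<bullet> e) \<le> h" if "e \<in> E" for e
    unfolding h_def support_fun_def using that by (rule SUP_upper)
  have lower: "ereal (r * t) \<le> h" if "0 < t" "\<forall>lam\<in>F. t < l1norm lam" for t
  proof -
    have "d \<notin> (\<lambda>lam. transpose A *v lam) ` {lam. l1norm lam \<le> t}"
      using that by (force simp: F_def)
    then obtain e where e: "e \<in> E" "r * t < d \<bullet> e"
      using separating_direction[OF \<open>0 < t\<close> r] unfolding E_def by blast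
    then have "ereal (r * t) \<le> ereal (d \<bullet> e)" by simp
    also have "\<dots> \<le> h" using e(1) by (rule upper)
    finally show ?thesis .
  qed
  show ?thesis
  proof (cases "F = {}")
    case True
    have "h = \<infinity>"
    proof (rule ereal_top)
      fix B
      have "B \<le> r * max 1 (B / r)"
        using r by (simp add: field_simps max_def)
      also have "ereal \<dots> \<le> h"
        using True by (intro lower) auto
      finally show "ereal B \<le> h" by simp
    qed
    with True r show ?thesis by (simp add: h_def E_def F_def top_ereal_def)
  next
    case False
    then obtain lam0 where lam0: "lam0 \<in> F" "\<forall>lam\<in>F. l1norm lam0 \<le> l1norm lam"
      using exists_min_l1norm_solution[of "transpose A" d] by (auto simp: F_def)
    define m where "m = l1norm lam0"
    have inf: "(INF lam\<in>F. ereal (l1norm lam)) = ereal m"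
      unfolding m_def by (rule antisym) (use lam0 in \<open>auto intro: INF_lower INF_greatest\<close>)
    have "h \<le> ereal (r * m)"
      unfolding h_def support_fun_def
    proof (rule SUP_least)
      fix e assume "e \<in> E"
      then have "d \<bullet> e \<le> m * r"
        using weak_duality[of A lam0 d e] lam0(1) l1norm_nonneg[of lam0]
        by (auto simp: E_def F_def m_def intro: order_trans mult_left_mono)
      then show "ereal (d \<bullet> e) \<le> ereal (r * m)" by (simp add: mult.commute)
    qed
    moreover have "ereal (r * m) \<le> h"
    proof (rule dense_le)
      fix q assume q: "q < ereal (r * m)"
      show "q \<le> h"
      proof (cases "q \<le> 0")
        case True
        have "ereal (d \<bullet> 0) \<le> h" using r by (intro upper) (simp add: E_def infnorm_0)
        with True show ?thesis by (simp add: zero_ereal_def)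
      next
        case False
        with q obtain qr where qr: "q = ereal qr" "0 < qr" "qr < r * m"
          by (cases q) auto
        have "\<forall>lam\<in>F. qr / r < l1norm lam"
          using lam0(2) qr r by (auto simp: m_def field_simps intro: less_le_trans)
        then have "ereal (r * (qr / r)) \<le> h"
          using qr r by (intro lower) auto
        with r qr show ?thesis by simp
      qed
    qed
    ultimately show ?thesis using inf by (simp add: h_def E_def F_def)
  qed
qed

lemma consistent_set_subset_translate:
  fixes A :: "real^'p^'m"
  assumes "infnorm (z - A *v theta_star) \<le> wbar"
  shows "{theta \<in> Theta. infnorm (z - A *v theta) \<le> wbar}
           \<subseteq> (\<lambda>e. theta_star + e) ` {e. infnorm (A *v e) \<le> 2 * wbar}"
proof
  fix theta assume theta: "theta \<in> {theta \<in> Theta. infnorm (z - A *v theta) \<le> wbar}"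
  have "A *v (theta - theta_star) = (z - A *v theta_star) - (z - A *v theta)"
    by (simp add: matrix_vector_mult_diff_distrib)
  then have "infnorm (A *v (theta - theta_star)) \<le> 2 * wbar"
    using infnorm_diff_le[of "z - A *v theta_star" "z - A *v theta"] assms theta by simp
  then show "theta \<in> (\<lambda>e. theta_star + e) ` {e. infnorm (A *v e) \<le> 2 * wbar}"
    by (intro image_eqI[of _ _ "theta - theta_star"]) auto
qed

theorem proposition1:
  fixes Theta :: "(real^'p) set"
    and theta_star :: "real^'p"
    and Phi :: "'n::finite \<Rightarrow> real^'p^'c::finite"
    and zs ws :: "'n \<Rightarrow> real^'c"
    and wbar :: real
    and A A_act :: "real^'p^('n \<times> 'c)"
    and z w :: "real^('n \<times> 'c)"
    and d :: "real^'p"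
  assumes theta_in: "theta_star \<in> Theta"
    and A_def: "A = stack_mat Phi"
    and exec: "A_act = A"
    and meas: "\<And>j. zs j = Phi j *v theta_star + ws j"
    and noise: "\<And>j. infnorm (ws j) \<le> wbar"
    and wbar_pos: "wbar > 0"
    and z_def: "z = stack_vec zs"
    and w_def: "w = stack_vec ws"
    and unit: "norm d = 1"
  shows
    "let Theta_act = {theta \<in> Theta. infnorm (z - A_act *v theta) \<le> wbar};
         E = {e. infnorm (A *v e) \<le> 2 * wbar};
         Theta_N = Theta \<inter> ((\<lambda>e. theta_star + e) ` E);
         Feas = {lam. transpose A *v lam = d}
     in width d Theta_act \<le> width d Theta_N
      \<and> width d Theta_N \<le> min (width d Theta) (2 * support_fun E d)
      \<and> support_fun E d = ereal (2 * wbar) * (INF lam\<in>Feas. ereal (l1norm lam))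
      \<and> (Feas \<noteq> {} \<longrightarrow> (\<exists>lam0\<in>Feas. \<forall>lam\<in>Feas. l1norm lam0 \<le> l1norm lam))"
proof -
  define E where "E = {e. infnorm (A *v e) \<le> 2 * wbar}"
  have "z - A *v theta_star = w"
    using meas by (simp add: z_def w_def A_def stack_mat_mult_vec stack_vec_diff)
  then have "infnorm (z - A *v theta_star) \<le> wbar"
    using noise by (simp add: w_def infnorm_stack_vec_le)
  then have act: "{theta \<in> Theta. infnorm (z - A_act *v theta) \<le> wbar}
                    \<subseteq> Theta \<inter> ((\<lambda>e. theta_star + e) ` E)"
    using consistent_set_subset_translate[of z A theta_star wbar Theta] exec
    by (auto simp: E_def)
  have "width d (Theta \<inter> ((\<lambda>e. theta_star + e) ` E)) \<le> width d ((\<lambda>e. theta_star + e) ` E)"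
    by (rule width_mono) blast
  also have "\<dots> \<le> 2 * support_fun E d"
    by (rule width_translate_le_twice_support_fun) (simp add: E_def vec.neg infnorm_neg)
  finally have error_set: "width d (Theta \<inter> ((\<lambda>e. theta_star + e) ` E)) \<le> 2 * support_fun E d" .
  have "width d (Theta \<inter> ((\<lambda>e. theta_star + e) ` E)) \<le> width d Theta"
    by (rule width_mono) blast
  moreover have "support_fun E d = ereal (2 * wbar) * (INF lam\<in>{lam. transpose A *v lam = d}. ereal (l1norm lam))"
    unfolding E_def using wbar_pos by (intro support_fun_infnorm_le) simp
  ultimately show ?thesis
    unfolding Let_def E_def[symmetric]
    using width_mono[OF act] error_set exists_min_l1norm_solution[of "transpose A" d]
    by simp
qed

end
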